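(* In the unit-speed single-speed model with station intensity $\lambda$, let $\mathcal A_V$ be the point process on $\mathbb R$ of the time coordinates $T_i$ of those heads $(T_i,H_i)$ of the head point process that lie on the lower envelope $\mathcal L_e$. Then the intensity of $\mathcal A_V$ is $\sqrt\lambda$.
   Context: Model: homogeneous Poisson point process of intensity $\lambda$ of initial station positions $X_i\in\mathbb R^2$, each moving at unit speed in an independent uniform direction. The distance of station $i$ to the origin at time $t$ is $((t-T_i)^2+H_i^2)^{1/2}$, where $(T_i,H_i)$ ("head") is the time and value of its minimal distance; the heads form a Poisson process on $\mathbb R\times\mathbb R^+$ of intensity $dt\otimes2\lambda dh$. The lower envelope is $\mathcal L_e=\{(t,L(t)):t\in\mathbb R\}$ with $L(t)$ the distance of the nearest station at time $t$. *)

theory Defs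
  imports "HOL-Probability.Probability"
begin

definition pcount :: "'b set \<Rightarrow> 'b set \<Rightarrow> ennreal" where
  "pcount S A = (if finite (S \<inter> A) then of_nat (card (S \<inter> A)) else \<infinity>)"

definition poisson_pp :: "'w measure \<Rightarrow> ('w \<Rightarrow> 'b set) \<Rightarrow> 'b measure \<Rightarrow> bool" where
  "poisson_pp M Phi mu \<longleftrightarrow>
     prob_space M \<and>
     (\<forall>\<omega>\<in>space M. Phi \<omega> \<subseteq> space mu) \<and>
     (\<forall>A\<in>sets mu. (\<lambda>\<omega>. pcount (Phi \<omega>) A) \<in> borel_measurable M) \<and>
     (\<forall>A\<in>sets mu. emeasure mu A < \<infinity> \<longrightarrow>
        (\<forall>k::nat. measure M {\<omega>\<in>space M. pcount (Phi \<omega>) A = of_nat k}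
             = exp (- measure mu A) * measure mu A ^ k / fact k)) \<and>
     (\<forall>A\<in>sets mu. emeasure mu A = \<infinity> \<longrightarrow>
        measure M {\<omega>\<in>space M. pcount (Phi \<omega>) A = \<infinity>} = 1) \<and>
     (\<forall>(n::nat) (A::nat \<Rightarrow> 'b set). (\<forall>i<n. A i \<in> sets mu) \<and> disjoint_family_on A {..<n} \<longrightarrow>
        prob_space.indep_vars M (\<lambda>_. borel) (\<lambda>i \<omega>. pcount (Phi \<omega>) (A i)) {..<n})"

definition head_intensity :: "real \<Rightarrow> (real \<times> real) measure" where
  "head_intensity lam = density lborel (\<lambda>p. if 0 < snd p then ennreal (2 * lam) else 0)"

text \<open>Lower envelope: L(t) = distance of nearest station at time t, where a station
  with head (T,H) is at distance sqrt((t-T)^2+H^2).\<close>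
definition envelope :: "(real \<times> real) set \<Rightarrow> real \<Rightarrow> real" where
  "envelope P t = (INF p\<in>P. sqrt ((t - fst p)\<^sup>2 + (snd p)\<^sup>2))"

definition AV :: "(real \<times> real) set \<Rightarrow> real set" where
  "AV P = {fst p | p. p \<in> P \<and> snd p = envelope P (fst p)}"

end

theory Submission
  imports Defs
begin

text \<open>A head \<open>p = (t, h)\<close> lies on the lower envelope iff no other head lies in its shadow, the
  open ball of radius \<open>h\<close> around \<open>(t, 0)\<close>. Heuristically (Mecke's formula) the expected number of
  such heads with \<open>t \<in> B\<close> is \<open>|B| \<integral>\<^sub>0\<^sup>\<infinity> 2\<lambda> exp (-\<pi>\<lambda>h\<^sup>2) dh = \<surd>\<lambda> |B|\<close>, since the shadow
  has intensity measure \<open>\<pi>\<lambda>h\<^sup>2\<close>. As only the finite-dimensional distributions of the head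
  process are available, we discretise: split the half plane into squares of side \<open>d\<close> and count
  the squares containing exactly one head over \<open>B\<close> and no head in a ball slightly smaller
  (resp. larger) than the shadow of any point of the square. These counts have explicit
  expectations by independence; the smaller balls overcount the envelope heads as \<open>d \<rightarrow> 0\<close>
  (heads are isolated), the larger ones undercount for every \<open>d\<close>, and Fatou's lemma resp.
  monotone convergence give the two inequalities.\<close>

lemma emeasure_lborel_pair_slices:
  assumes "X \<in> sets (borel :: (real \<times> real) measure)"
  shows "emeasure lborel X = (\<integral>\<^sup>+t. emeasure lborel (Pair t -` X) \<partial>lborel)"
proof -
  have "X \<in> sets (lborel \<Otimes>\<^sub>M lborel)"
    using assms unfolding lborel_prod by simp
  then show ?thesis
    by (simp add: lborel_prod[symmetric] lborel.emeasure_pair_measure_alt)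
qed

lemma slice_ball_axis:
  fixes c r t :: real
  assumes "0 \<le> r"
  shows "Pair t -` ball (c, 0::real) r = {- sqrt (max 0 (r\<^sup>2 - (t - c)\<^sup>2))<..<sqrt (max 0 (r\<^sup>2 - (t - c)\<^sup>2))}"
proof -
  have "dist (c, 0) (t, s) < r \<longleftrightarrow> s\<^sup>2 < r\<^sup>2 - (t - c)\<^sup>2" for s
  proof -
    have "dist (c, 0) (t, s) = sqrt ((t - c)\<^sup>2 + s\<^sup>2)"
      by (simp add: dist_Pair_Pair dist_real_def power2_commute)
    also have "\<dots> < r \<longleftrightarrow> (t - c)\<^sup>2 + s\<^sup>2 < r\<^sup>2"
      using assms real_sqrt_less_iff[of _ "r\<^sup>2"] by simp
    finally show ?thesis by linarith
  qed
  moreover have "s\<^sup>2 < x \<longleftrightarrow> \<bar>s\<bar> < sqrt (max 0 x)" for s x :: real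
    by (smt (verit, best) real_sqrt_abs real_sqrt_less_iff real_sqrt_zero zero_le_power2)
  ultimately show ?thesis by (auto simp: abs_less_iff)
qed

lemma emeasure_lborel_upper_half_ball:
  fixes c r :: real
  assumes "0 \<le> r"
  shows "emeasure lborel (ball (c, 0::real) r \<inter> {y. 0 < snd y}) = ennreal (pi * r\<^sup>2 / 2)"
proof -
  define w where "w t = sqrt (max 0 (r\<^sup>2 - (t - c)\<^sup>2))" for t
  have half_borel: "ball (c, 0::real) r \<inter> {y. 0 < snd y} \<in> sets borel"
    by (intro sets.Int borel_open open_ball open_Collect_less continuous_intros)
  have upper: "Pair t -` (ball (c, 0::real) r \<inter> {y. 0 < snd y}) = {0<..<w t}" for t
    using slice_ball_axis[OF assms] by (auto simp: w_def)
  have "emeasure lborel (ball (c, 0::real) r) = ennreal (pi * r\<^sup>2)"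
    using emeasure_ball[of r "(c, 0::real)"] assms by (simp add: unit_ball_vol_2 power2_eq_square)
  then have "ennreal 2 * ennreal (pi * r\<^sup>2 / 2) = emeasure lborel (ball (c, 0::real) r)"
    by (subst ennreal_mult[symmetric]) auto
  also have "\<dots> = (\<integral>\<^sup>+t. ennreal (2 * w t) \<partial>lborel)"
    by (simp add: emeasure_lborel_pair_slices slice_ball_axis[OF assms] w_def)
  also have "\<dots> = ennreal 2 * (\<integral>\<^sup>+t. ennreal (w t) \<partial>lborel)"
    by (simp add: w_def ennreal_mult nn_integral_cmult)
  also have "(\<integral>\<^sup>+t. ennreal (w t) \<partial>lborel) = emeasure lborel (ball (c, 0::real) r \<inter> {y. 0 < snd y})"
    unfolding emeasure_lborel_pair_slices[OF half_borel] upper by (simp add: w_def)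
  finally show ?thesis
    by (simp only: ennreal_mult_cancel_left) simp
qed

lemma borel_measurable_snd [measurable]: "(snd :: real \<times> real \<Rightarrow> real) \<in> borel_measurable borel"
  by (intro borel_measurable_continuous_onI continuous_intros)

lemma borel_strip [measurable]: "B \<in> sets borel \<Longrightarrow> B \<times> {0::real<..} \<in> sets borel"
  by (intro borel_Times) simp_all

lemma sets_head_intensity [simp, measurable_cong]: "sets (head_intensity lam) = sets borel"
  by (simp add: head_intensity_def)

lemma emeasure_head_intensity:
  assumes "0 \<le> lam" and "X \<in> sets borel"
  shows "emeasure (head_intensity lam) X = ennreal (2 * lam) * emeasure lborel (X \<inter> {y. 0 < snd y})"
proof -
  have "emeasure (head_intensity lam) X =
      (\<integral>\<^sup>+y. ennreal (2 * lam) * indicator (X \<inter> {y. 0 < snd y}) y \<partial>lborel)"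
    unfolding head_intensity_def using assms(2)
    by (subst emeasure_density) (auto intro!: nn_integral_cong simp: indicator_def)
  then show ?thesis
    using assms(2) by (simp add: nn_integral_cmult_indicator)
qed

lemma emeasure_head_intensity_le:
  assumes "0 \<le> lam" and "X \<in> sets borel"
  shows "emeasure (head_intensity lam) X \<le> ennreal (2 * lam) * emeasure lborel X"
  unfolding emeasure_head_intensity[OF assms]
  by (intro mult_left_mono emeasure_mono) (use assms(2) in auto)

lemma emeasure_head_intensity_lower_half_plane:
  assumes "0 \<le> lam"
  shows "emeasure (head_intensity lam) {y. snd y \<le> 0} = 0"
proof -
  have "{y :: real \<times> real. snd y \<le> 0} \<inter> {y. 0 < snd y} = {}" by auto
  then show ?thesis
    using assms by (subst emeasure_head_intensity) auto
qed

lemma emeasure_head_intensity_bounded: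
  assumes "0 \<le> lam" and "X \<in> sets borel" and "bounded X"
  shows "emeasure (head_intensity lam) X < \<infinity>"
  using emeasure_head_intensity_le[OF assms(1,2)] emeasure_bounded_finite[OF assms(3)]
  by (simp add: ennreal_mult_less_top le_less_trans)

lemma measure_head_intensity_ball:
  assumes "0 \<le> lam"
  shows "measure (head_intensity lam) (ball (c, 0::real) r) = pi * lam * (max 0 r)\<^sup>2"
proof (cases "0 \<le> r")
  case True
  have "emeasure (head_intensity lam) (ball (c, 0::real) r) = ennreal (2 * lam) * ennreal (pi * r\<^sup>2 / 2)"
    using assms True by (simp add: emeasure_head_intensity emeasure_lborel_upper_half_ball)
  also have "\<dots> = ennreal (pi * lam * (max 0 r)\<^sup>2)"
    using assms True by (simp add: ennreal_mult[symmetric] max_def)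
  finally show ?thesis
    using assms by (simp add: measure_def)
qed (simp add: ball_empty)

abbreviation ecard :: "'a set \<Rightarrow> ennreal" where
  "ecard S \<equiv> emeasure (count_space UNIV) S"

lemma ecard_eq: "ecard S = (if finite S then of_nat (card S) else \<infinity>)"
  by (simp add: emeasure_count_space)

lemma pcount_eq_ecard: "pcount S A = ecard (S \<inter> A)"
  by (simp add: pcount_def ecard_eq)

lemma pcount_eq_0_iff: "pcount S A = 0 \<longleftrightarrow> S \<inter> A = {}"
  by (auto simp: pcount_def)

lemma pcount_eq_1_iff: "pcount S A = 1 \<longleftrightarrow> (\<exists>p. S \<inter> A = {p})"
  by (auto simp: pcount_def card_1_singleton_iff)

lemma pcount_less_top_iff: "pcount S A < \<infinity> \<longleftrightarrow> finite (S \<inter> A)"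
  by (simp add: pcount_def of_nat_less_top)

lemma ecard_mono: "S \<subseteq> T \<Longrightarrow> ecard S \<le> ecard T"
  by (rule emeasure_mono) simp_all

lemma ecard_image_le: "ecard (f ` S) \<le> ecard S"
  by (cases "finite S") (auto simp: ecard_eq card_image_le)

lemma ecard_image: "inj_on f S \<Longrightarrow> ecard (f ` S) = ecard S"
  by (auto simp: ecard_eq card_image dest: finite_imageD)

lemma ecard_events_eq_nn_integral:
  "ecard {i. x \<in> E i} = (\<integral>\<^sup>+i. indicator (E i) x \<partial>count_space UNIV)"
proof -
  have "(\<lambda>i. indicator (E i) x :: ennreal) = indicator {i. x \<in> E i}"
    by (auto simp: indicator_def)
  then show ?thesis
    by simp
qed

lemma borel_measurable_ecard_random_set:
  fixes S :: "'a \<Rightarrow> 'i :: countable set"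
  assumes "\<And>i. {x\<in>space M. i \<in> S x} \<in> sets M"
  shows "(\<lambda>x. ecard (S x)) \<in> borel_measurable M"
proof -
  define E where "E i = {x\<in>space M. i \<in> S x}" for i
  interpret count: sigma_finite_measure "count_space (UNIV :: 'i set)"
    by (rule sigma_finite_measure_count_space)
  have "(\<lambda>(i, x). indicator (E i) x :: ennreal) \<in> borel_measurable (count_space UNIV \<Otimes>\<^sub>M M)"
    using assms by (intro measurable_pair_measure_countable1) (simp_all add: E_def)
  then have "(\<lambda>(x, i). indicator (E i) x :: ennreal) \<in> borel_measurable (M \<Otimes>\<^sub>M count_space UNIV)"
    by (subst measurable_pair_swap_iff) simp
  then have "(\<lambda>x. ecard {i. x \<in> E i}) \<in> borel_measurable M"
    unfolding ecard_events_eq_nn_integral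
    by (rule count.borel_measurable_nn_integral[where f = "\<lambda>x i. indicator (E i) x", simplified])
  then show ?thesis
    by (rule measurable_cong[THEN iffD1, rotated]) (simp add: E_def)
qed

lemma nn_integral_ecard_random_set:
  fixes S :: "'a \<Rightarrow> 'i :: countable set"
  assumes "\<And>i. {x\<in>space M. i \<in> S x} \<in> sets M"
  shows "(\<integral>\<^sup>+x. ecard (S x) \<partial>M) = (\<integral>\<^sup>+i. emeasure M {x\<in>space M. i \<in> S x} \<partial>count_space UNIV)"
proof -
  have "(\<integral>\<^sup>+x. ecard (S x) \<partial>M) = (\<integral>\<^sup>+x. \<integral>\<^sup>+i. indicator {x\<in>space M. i \<in> S x} x \<partial>count_space UNIV \<partial>M)"
    by (intro nn_integral_cong) (simp add: ecard_events_eq_nn_integral[symmetric])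
  also have "\<dots> = (\<integral>\<^sup>+i. emeasure M {x\<in>space M. i \<in> S x} \<partial>count_space UNIV)"
    using assms by (subst nn_integral_count_space_nn_integral) simp_all
  finally show ?thesis .
qed

lemma uniformly_isolated:
  fixes P :: "'a :: metric_space set"
  assumes "\<forall>K. bounded K \<longrightarrow> finite (P \<inter> K)" and "finite F" and "F \<subseteq> P"
  shows "\<exists>e>0. \<forall>p\<in>F. \<forall>q\<in>P. q \<noteq> p \<longrightarrow> e \<le> dist p q"
proof -
  define near where "near = P \<inter> (\<Union>p\<in>F. cball p 1)"
  have "finite near"
    unfolding near_def using assms(1,2) by (simp add: bounded_UN)
  define e where "e = Min (insert 1 {dist p q | p q. p \<in> F \<and> q \<in> near \<and> p \<noteq> q})"
  have fin: "finite {dist p q | p q. p \<in> F \<and> q \<in> near \<and> p \<noteq> q}"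
    by (rule finite_subset[of _ "case_prod dist ` (F \<times> near)"])
      (use assms(2) \<open>finite near\<close> in auto)
  show ?thesis
  proof (intro exI conjI ballI impI)
    show "0 < e"
      using fin by (auto simp: e_def)
    fix p q assume "p \<in> F" "q \<in> P" "q \<noteq> p"
    show "e \<le> dist p q"
    proof (cases "q \<in> cball p 1")
      case True
      then have "q \<in> near"
        using \<open>p \<in> F\<close> \<open>q \<in> P\<close> by (auto simp: near_def)
      then show ?thesis
        using fin \<open>p \<in> F\<close> \<open>q \<noteq> p\<close> unfolding e_def by (intro Min_le) auto
    next
      case False
      have "e \<le> 1"
        using fin by (auto simp: e_def)
      then show ?thesis
        using False by simp
    qed
  qed
qed

section \<open>Poisson point processes\<close>

locale poisson_process =
  fixes M :: "'w measure" and Phi :: "'w \<Rightarrow> 'b set" and mu :: "'b measure"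
  assumes poisson_pp: "poisson_pp M Phi mu"
begin

sublocale prob_space M
  using poisson_pp unfolding poisson_pp_def by (elim conjE) assumption

lemma measurable_pcount [measurable]:
  assumes "A \<in> sets mu"
  shows "(\<lambda>\<omega>. pcount (Phi \<omega>) A) \<in> borel_measurable M"
proof -
  have "\<forall>A\<in>sets mu. (\<lambda>\<omega>. pcount (Phi \<omega>) A) \<in> borel_measurable M"
    using poisson_pp unfolding poisson_pp_def by (elim conjE) assumption
  then show ?thesis
    using assms by (rule bspec)
qed

lemma sets_pcount_eq:
  assumes "A \<in> sets mu"
  shows "{\<omega>\<in>space M. pcount (Phi \<omega>) A = c} \<in> sets M"
  using pred_sets2[OF _ measurable_pcount[OF assms], of "{c}"] by (simp add: pred_def)

lemma prob_pcount_eq: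
  assumes "A \<in> sets mu" and "emeasure mu A < \<infinity>"
  shows "prob {\<omega>\<in>space M. pcount (Phi \<omega>) A = of_nat k} = exp (- measure mu A) * measure mu A ^ k / fact k"
proof -
  have "\<forall>A\<in>sets mu. emeasure mu A < \<infinity> \<longrightarrow> (\<forall>k::nat. prob {\<omega>\<in>space M. pcount (Phi \<omega>) A = of_nat k}
      = exp (- measure mu A) * measure mu A ^ k / fact k)"
    using poisson_pp unfolding poisson_pp_def by (elim conjE) assumption
  then show ?thesis
    using assms by simp
qed

lemma indep_vars_pcount:
  fixes n :: nat
  assumes "\<And>i. i < n \<Longrightarrow> S i \<in> sets mu" and "disjoint_family_on S {..<n}"
  shows "indep_vars (\<lambda>_. borel) (\<lambda>i \<omega>. pcount (Phi \<omega>) (S i)) {..<n}"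
proof -
  have "\<forall>(n::nat) (S::nat \<Rightarrow> 'b set). (\<forall>i<n. S i \<in> sets mu) \<and> disjoint_family_on S {..<n} \<longrightarrow>
      indep_vars (\<lambda>_. borel) (\<lambda>i \<omega>. pcount (Phi \<omega>) (S i)) {..<n}"
    using poisson_pp unfolding poisson_pp_def by (elim conjE) assumption
  moreover have "\<forall>i<n. S i \<in> sets mu"
    using assms(1) by simp
  ultimately show ?thesis
    using assms(2) by simp
qed

lemma prob_pcount_1_0:
  assumes A: "A \<in> sets mu" "emeasure mu A < \<infinity>" and C: "C \<in> sets mu" "emeasure mu C < \<infinity>"
    and "A \<inter> C = {}"
  shows "prob {\<omega>\<in>space M. pcount (Phi \<omega>) A = 1 \<and> pcount (Phi \<omega>) C = 0} =
    measure mu A * exp (- measure mu A) * exp (- measure mu C)"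
proof -
  define S where "S i = (if i = 0 then A else C)" for i :: nat
  define v where "v i = (if i = 0 then 1 else 0 :: ennreal)" for i :: nat
  define E where "E i = (\<lambda>\<omega>. pcount (Phi \<omega>) (S i)) -` {v i} \<inter> space M" for i
  have "disjoint_family_on S {..<2}"
    using \<open>A \<inter> C = {}\<close> by (auto simp: disjoint_family_on_def S_def)
  then have "indep_vars (\<lambda>_. borel) (\<lambda>i \<omega>. pcount (Phi \<omega>) (S i)) {..<2}"
    using A C by (intro indep_vars_pcount[OF _ \<open>disjoint_family_on S {..<2}\<close>]) (simp add: S_def)
  then have "prob (\<Inter>i\<in>{..<2}. E i) = (\<Prod>i\<in>{..<2}. prob (E i))"
    unfolding E_def by (rule indep_varsD) (auto simp: lessThan_empty_iff)
  then have indep: "prob (E 0 \<inter> E 1) = prob (E 0) * prob (E 1)"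
    by (simp add: numeral_2_eq_2 lessThan_Suc Int_commute)
  have "E 0 = {\<omega>\<in>space M. pcount (Phi \<omega>) A = of_nat 1}"
    by (auto simp: E_def S_def v_def)
  then have E0: "prob (E 0) = measure mu A * exp (- measure mu A)"
    by (simp only: prob_pcount_eq[OF A]) simp
  have "E 1 = {\<omega>\<in>space M. pcount (Phi \<omega>) C = of_nat 0}"
    by (auto simp: E_def S_def v_def)
  then have E1: "prob (E 1) = exp (- measure mu C)"
    by (simp only: prob_pcount_eq[OF C]) simp
  have "{\<omega>\<in>space M. pcount (Phi \<omega>) A = 1 \<and> pcount (Phi \<omega>) C = 0} = E 0 \<inter> E 1"
    by (auto simp: E_def S_def v_def)
  then show ?thesis
    by (simp only: indep E0 E1)
qed

lemma AE_disjoint_null_set: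
  assumes "A \<in> sets mu" and "emeasure mu A = 0"
  shows "AE \<omega> in M. Phi \<omega> \<inter> A = {}"
proof -
  have "prob {\<omega>\<in>space M. pcount (Phi \<omega>) A = of_nat 0} = 1"
    using prob_pcount_eq[of A 0] assms by (simp add: measure_def)
  from AE_prob_1[OF this] show ?thesis
    by (simp add: pcount_eq_0_iff)
qed

lemma AE_finite_inter:
  assumes A: "A \<in> sets mu" "emeasure mu A < \<infinity>"
  shows "AE \<omega> in M. finite (Phi \<omega> \<inter> A)"
proof -
  define E where "E k = {\<omega>\<in>space M. pcount (Phi \<omega>) A = of_nat k}" for k :: nat
  have "(\<lambda>k. prob (E k)) sums prob (\<Union>k. E k)"
    using A by (intro finite_measure_UNION) (auto simp: E_def disjoint_family_on_def)
  moreover have "(\<lambda>k. exp (- measure mu A) * (measure mu A ^ k /\<^sub>R fact k)) sums (exp (- measure mu A) * exp (measure mu A))"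
    by (intro sums_mult exp_converges)
  moreover have "prob (E k) = exp (- measure mu A) * (measure mu A ^ k /\<^sub>R fact k)" for k
    using prob_pcount_eq[OF A] by (simp add: E_def field_simps)
  ultimately have "prob (\<Union>k. E k) = exp (- measure mu A) * exp (measure mu A)"
    by (simp add: sums_unique2)
  then have "prob (\<Union>k. E k) = 1"
    by (simp add: exp_minus_inverse mult.commute)
  then have "AE \<omega> in M. \<omega> \<in> (\<Union>k. E k)"
    by (rule AE_prob_1)
  moreover have "finite (Phi \<omega> \<inter> A)" if \<omega>: "\<omega> \<in> (\<Union>k. E k)" for \<omega>
  proof -
    obtain k where "pcount (Phi \<omega>) A = of_nat k"
      using \<omega> by (auto simp: E_def)
    then have "pcount (Phi \<omega>) A < \<infinity>"
      by (simp add: of_nat_less_top)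
    then show ?thesis
      by (simp only: pcount_less_top_iff)
  qed
  ultimately show ?thesis
    by (rule eventually_mono)
qed

end

section \<open>Heads on the envelope\<close>

text \<open>A head \<open>q\<close> lies in \<open>shadow p\<close> iff at time \<open>fst p\<close> the station of \<open>q\<close> is closer to the origin
  than \<open>snd p\<close>.\<close>

abbreviation shadow :: "real \<times> real \<Rightarrow> (real \<times> real) set" where
  "shadow p \<equiv> ball (fst p, 0) (snd p)"

lemma envelope_eq_INF_dist: "envelope P t = (INF q\<in>P. dist (t, 0) q)"
  by (simp add: envelope_def dist_prod_def dist_real_def power2_commute)

lemma dist_axis_self: "0 \<le> snd p \<Longrightarrow> dist (fst p, 0) p = snd p"
  by (cases p) (simp add: dist_Pair_Pair dist_real_def)

lemma on_envelope_iff: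
  assumes "p \<in> P" and "0 \<le> snd p"
  shows "snd p = envelope P (fst p) \<longleftrightarrow> P \<inter> shadow p = {}"
proof -
  have bdd: "bdd_below ((\<lambda>q. dist (fst p, 0) q) ` P)"
    by (rule bdd_belowI[of _ 0]) auto
  have "envelope P (fst p) \<le> snd p"
    using cINF_lower[OF bdd assms(1)] dist_axis_self[OF assms(2)] by (simp add: envelope_eq_INF_dist)
  moreover have "snd p \<le> envelope P (fst p) \<longleftrightarrow> (\<forall>q\<in>P. snd p \<le> dist (fst p, 0) q)"
    unfolding envelope_eq_INF_dist using le_cINF_iff[OF _ bdd] assms(1) by blast
  ultimately show ?thesis
    by (auto simp: not_less)
qed

definition envelope_heads :: "(real \<times> real) set \<Rightarrow> (real \<times> real) set" where
  "envelope_heads P = {p \<in> P. 0 < snd p \<and> P \<inter> shadow p = {}}"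

lemma inj_on_fst_envelope_heads: "inj_on fst (envelope_heads P)"
proof (rule inj_onI)
  have not_less: "\<not> snd p < snd q"
    if "p \<in> envelope_heads P" "q \<in> envelope_heads P" "fst p = fst q" for p q
  proof
    assume "snd p < snd q"
    then have "p \<in> shadow q"
      using that dist_axis_self[of p] by (auto simp: envelope_heads_def)
    then show False
      using that by (auto simp: envelope_heads_def)
  qed
  fix p q assume "p \<in> envelope_heads P" "q \<in> envelope_heads P" "fst p = fst q"
  then show "p = q"
    using not_less[of p q] not_less[of q p] by (simp add: prod_eq_iff)
qed

lemma pcount_AV:
  assumes "\<forall>q\<in>P. 0 < snd q"
  shows "pcount (AV P) B = ecard (envelope_heads P \<inter> B \<times> {0<..})"
proof -
  have "p \<in> P \<and> snd p = envelope P (fst p) \<longleftrightarrow> p \<in> envelope_heads P" for p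
  proof (cases "p \<in> P")
    case True
    then have "0 < snd p" using assms by auto
    then show ?thesis using on_envelope_iff[OF True] by (auto simp: envelope_heads_def)
  qed (simp add: envelope_heads_def)
  then have "AV P = fst ` envelope_heads P"
    unfolding AV_def by blast
  moreover have "fst ` envelope_heads P \<inter> B = fst ` (envelope_heads P \<inter> B \<times> {0<..})"
    by (auto simp: envelope_heads_def)
  ultimately have "AV P \<inter> B = fst ` (envelope_heads P \<inter> B \<times> {0<..})"
    by simp
  then show ?thesis
    unfolding pcount_eq_ecard
    by (metis ecard_image inj_on_fst_envelope_heads inj_on_subset inf_le1)
qed

section \<open>Grid cells\<close>

definition corner :: "real \<Rightarrow> int \<times> int \<Rightarrow> real \<times> real" where
  "corner d Q = (of_int (fst Q) * d, of_int (snd Q) * d)"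

definition cell :: "real \<Rightarrow> int \<times> int \<Rightarrow> (real \<times> real) set" where
  "cell d Q = {fst (corner d Q)..<fst (corner d Q) + d} \<times> {snd (corner d Q)..<snd (corner d Q) + d}"

definition cell_index :: "real \<Rightarrow> real \<times> real \<Rightarrow> int \<times> int" where
  "cell_index d y = (\<lfloor>fst y / d\<rfloor>, \<lfloor>snd y / d\<rfloor>)"

lemma cell_borel [measurable]: "cell d Q \<in> sets borel"
  unfolding cell_def by (intro borel_Times) auto

lemma mem_cell_iff:
  assumes "0 < d"
  shows "y \<in> cell d Q \<longleftrightarrow> cell_index d y = Q"
proof -
  have "of_int i * d \<le> x \<and> x < of_int i * d + d \<longleftrightarrow> \<lfloor>x / d\<rfloor> = i" for x i
    using assms by (simp add: floor_eq_iff le_divide_eq divide_less_eq algebra_simps)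
  then show ?thesis
    unfolding cell_def corner_def cell_index_def by (cases y; cases Q) auto
qed

lemma mem_cell_index: "0 < d \<Longrightarrow> y \<in> cell d (cell_index d y)"
  by (simp add: mem_cell_iff)

lemma mem_cellD:
  assumes "y \<in> cell d Q"
  shows "\<bar>fst y - fst (corner d Q)\<bar> < d \<and> snd (corner d Q) \<le> snd y \<and> snd y < snd (corner d Q) + d"
  using assms by (auto simp: cell_def)

lemma emeasure_lborel_cell:
  assumes "0 < d"
  shows "emeasure lborel (cell d Q) = ennreal (d\<^sup>2)"
proof -
  have "emeasure lborel (cell d Q) = emeasure (lborel \<Otimes>\<^sub>M lborel) (cell d Q)"
    by (simp add: lborel_prod)
  also have "\<dots> = ennreal d * ennreal d"
    unfolding cell_def using assms by (subst lborel.emeasure_pair_measure_Times) auto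
  finally show ?thesis
    using assms by (simp add: ennreal_mult power2_eq_square)
qed

lemma emeasure_head_intensity_cell_le:
  assumes "0 \<le> lam" and "0 < d"
  shows "emeasure (head_intensity lam) (cell d Q) \<le> ennreal (2 * lam * d\<^sup>2)"
  using emeasure_head_intensity_le[OF assms(1) cell_borel[of d Q]] assms
  by (simp add: emeasure_lborel_cell ennreal_mult[symmetric] mult.assoc)

lemma dist_less_of_mem_cell:
  assumes "p \<in> cell d Q" and "q \<in> cell d Q"
  shows "dist p q < 2 * d"
proof -
  have "\<bar>fst p - fst q\<bar> < d" "\<bar>snd p - snd q\<bar> < d"
    using assms by (auto simp: cell_def)
  moreover have "dist p q \<le> \<bar>fst p - fst q\<bar> + \<bar>snd p - snd q\<bar>"
    using sqrt_sum_squares_le_sum_abs[of "fst p - fst q" "snd p - snd q"]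
    by (cases p, cases q) (simp add: dist_Pair_Pair dist_real_def)
  ultimately show ?thesis by linarith
qed

lemma ball_subset_shadow_of_mem_cell:
  assumes "p \<in> cell d Q"
  shows "ball (fst (corner d Q), 0::real) (snd (corner d Q) - d) \<subseteq> shadow p"
  using mem_cellD[OF assms] by (subst ball_subset_ball_iff) (auto simp: dist_Pair_Pair dist_real_def)

lemma shadow_subset_ball_of_mem_cell:
  assumes "p \<in> cell d Q"
  shows "shadow p \<subseteq> ball (fst (corner d Q), 0) (snd (corner d Q) + 2 * d)"
  using mem_cellD[OF assms] by (subst ball_subset_ball_iff) (auto simp: dist_Pair_Pair dist_real_def)

lemma cell_disjoint_lower_ball:
  assumes "0 \<le> d"
  shows "cell d Q \<inter> ball (fst (corner d Q), 0) (snd (corner d Q) - d) = {}"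
proof -
  have "\<not> dist (fst (corner d Q), 0) y < snd (corner d Q) - d" if "y \<in> cell d Q" for y
  proof -
    have "\<bar>snd y\<bar> \<le> dist (fst (corner d Q), 0) y"
      using dist_snd_le[of "(fst (corner d Q), 0)" y] by (simp add: dist_real_def)
    then show ?thesis
      using mem_cellD[OF that] abs_ge_self[of "snd y"] assms by linarith
  qed
  then show ?thesis
    by auto
qed

text \<open>For small mesh \<open>d\<close> the cells of the envelope heads over \<open>B\<close> contain the lower cells and are
  contained in the upper cells; the empty balls in the two conditions are the inner and outer
  bounds for the shadows of the points of the cell.\<close>

definition upper_cells :: "(real \<times> real) set \<Rightarrow> real set \<Rightarrow> real \<Rightarrow> (int \<times> int) set" where
  "upper_cells P B d = {Q. pcount P (cell d Q \<inter> B \<times> {0<..}) = 1 \<and>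
     pcount P (ball (fst (corner d Q), 0) (snd (corner d Q) - d)) = 0}"

definition lower_cells :: "(real \<times> real) set \<Rightarrow> real set \<Rightarrow> real \<Rightarrow> (int \<times> int) set" where
  "lower_cells P B d = {Q. pcount P (cell d Q \<inter> B \<times> {0<..}) = 1 \<and>
     pcount P ((ball (fst (corner d Q), 0) (snd (corner d Q) + 2 * d) \<union> cell d Q) - (cell d Q \<inter> B \<times> {0<..})) = 0}"

lemma ecard_lower_cells_le:
  assumes "0 < d"
  shows "ecard (lower_cells P B d) \<le> ecard (envelope_heads P \<inter> B \<times> {0<..})"
proof -
  have "lower_cells P B d \<subseteq> cell_index d ` (envelope_heads P \<inter> B \<times> {0<..})"
  proof
    fix Q assume "Q \<in> lower_cells P B d"
    then obtain p where p: "P \<inter> (cell d Q \<inter> B \<times> {0<..}) = {p}"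
      and empty: "P \<inter> ((ball (fst (corner d Q), 0) (snd (corner d Q) + 2 * d) \<union> cell d Q) - (cell d Q \<inter> B \<times> {0<..})) = {}"
      unfolding lower_cells_def pcount_eq_1_iff pcount_eq_0_iff by auto
    have "p \<in> P" "p \<in> cell d Q" "p \<in> B \<times> {0<..}"
      using p by auto
    have "P \<inter> shadow p \<subseteq> {p}"
      using shadow_subset_ball_of_mem_cell[OF \<open>p \<in> cell d Q\<close>] p empty by blast
    moreover have "p \<notin> shadow p"
      using \<open>p \<in> B \<times> {0<..}\<close> dist_axis_self[of p] by auto
    ultimately have "p \<in> envelope_heads P \<inter> B \<times> {0<..}"
      using \<open>p \<in> P\<close> \<open>p \<in> B \<times> {0<..}\<close> by (auto simp: envelope_heads_def)
    moreover have "Q = cell_index d p"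
      using \<open>p \<in> cell d Q\<close> mem_cell_iff[OF assms] by simp
    ultimately show "Q \<in> cell_index d ` (envelope_heads P \<inter> B \<times> {0<..})"
      by blast
  qed
  then have "ecard (lower_cells P B d) \<le> ecard (cell_index d ` (envelope_heads P \<inter> B \<times> {0<..}))"
    by (rule ecard_mono)
  also have "\<dots> \<le> ecard (envelope_heads P \<inter> B \<times> {0<..})"
    by (rule ecard_image_le)
  finally show ?thesis .
qed

lemma card_le_ecard_upper_cells:
  assumes locfin: "\<forall>K. bounded K \<longrightarrow> finite (P \<inter> K)"
    and F: "finite F" "F \<subseteq> envelope_heads P \<inter> B \<times> {0<..}"
  shows "\<exists>e>0. \<forall>d. 0 < d \<longrightarrow> d < e \<longrightarrow> of_nat (card F) \<le> ecard (upper_cells P B d)"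
proof -
  have "F \<subseteq> P"
    using F(2) by (auto simp: envelope_heads_def)
  obtain e where "0 < e" and e: "\<forall>p\<in>F. \<forall>q\<in>P. q \<noteq> p \<longrightarrow> e \<le> dist p q"
    using uniformly_isolated[OF locfin F(1) \<open>F \<subseteq> P\<close>] by blast
  have "of_nat (card F) \<le> ecard (upper_cells P B d)" if "0 < d" "d < e / 2" for d
  proof -
    have alone: "P \<inter> cell d (cell_index d p) = {p}" if "p \<in> F" for p
    proof -
      have "q = p" if "q \<in> P" "q \<in> cell d (cell_index d p)" for q
        using dist_less_of_mem_cell[OF mem_cell_index[OF \<open>0 < d\<close>] that(2)] e \<open>p \<in> F\<close> that(1) \<open>d < e / 2\<close>
        by force
      then show ?thesis
        using \<open>p \<in> F\<close> \<open>F \<subseteq> P\<close> mem_cell_index[OF \<open>0 < d\<close>] by blast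
    qed
    have "cell_index d ` F \<subseteq> upper_cells P B d"
    proof
      fix Q assume "Q \<in> cell_index d ` F"
      then obtain p where "p \<in> F" and Q: "Q = cell_index d p" by blast
      then have "p \<in> cell d Q"
        using mem_cell_index[OF \<open>0 < d\<close>] by simp
      have "P \<inter> (cell d Q \<inter> B \<times> {0<..}) = {p}"
        using alone[OF \<open>p \<in> F\<close>] F(2) \<open>p \<in> F\<close> Q by blast
      moreover have "P \<inter> ball (fst (corner d Q), 0) (snd (corner d Q) - d) = {}"
        using ball_subset_shadow_of_mem_cell[OF \<open>p \<in> cell d Q\<close>] F(2) \<open>p \<in> F\<close>
        by (auto simp: envelope_heads_def)
      ultimately show "Q \<in> upper_cells P B d"
        unfolding upper_cells_def pcount_eq_1_iff pcount_eq_0_iff by blast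
    qed
    moreover have "inj_on (cell_index d) F"
    proof (rule inj_onI)
      fix p q assume "p \<in> F" "q \<in> F" "cell_index d p = cell_index d q"
      then have "q \<in> P \<inter> cell d (cell_index d p)"
        using \<open>F \<subseteq> P\<close> mem_cell_index[OF \<open>0 < d\<close>, of q] by auto
      then show "p = q"
        using alone[OF \<open>p \<in> F\<close>] by auto
    qed
    ultimately have "ecard F \<le> ecard (upper_cells P B d)"
      using ecard_mono ecard_image by metis
    then show ?thesis
      using F(1) by (simp add: ecard_eq)
  qed
  then show ?thesis
    using \<open>0 < e\<close> by (intro exI[of _ "e / 2"]) auto
qed

lemma ecard_envelope_heads_le_liminf:
  assumes locfin: "\<forall>K. bounded K \<longrightarrow> finite (P \<inter> K)"
    and d: "d \<longlonglongrightarrow> 0" "\<And>n. 0 < d n"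
  shows "ecard (envelope_heads P \<inter> B \<times> {0<..}) \<le> liminf (\<lambda>n. ecard (upper_cells P B (d n)))"
proof -
  have card_le: "of_nat (card F) \<le> liminf (\<lambda>n. ecard (upper_cells P B (d n)))"
    if F: "finite F" "F \<subseteq> envelope_heads P \<inter> B \<times> {0<..}" for F
  proof -
    obtain e where "0 < e" and e: "\<forall>d. 0 < d \<longrightarrow> d < e \<longrightarrow> of_nat (card F) \<le> ecard (upper_cells P B d)"
      using card_le_ecard_upper_cells[OF locfin F] by blast
    have "eventually (\<lambda>n. d n < e) sequentially"
      using order_tendstoD(2)[OF d(1) \<open>0 < e\<close>] .
    then show ?thesis
      using e d(2) by (intro Liminf_bounded) (auto elim: eventually_mono)
  qed
  show ?thesis
  proof (cases "finite (envelope_heads P \<inter> B \<times> {0<..})")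
    case True
    then show ?thesis
      using card_le[OF True order.refl] by (simp add: ecard_eq)
  next
    case False
    have "of_nat k \<le> liminf (\<lambda>n. ecard (upper_cells P B (d n)))" for k
    proof -
      obtain F where "finite F" "card F = k" "F \<subseteq> envelope_heads P \<inter> B \<times> {0<..}"
        using infinite_arbitrarily_large[OF False] by blast
      then show ?thesis
        using card_le[of F] by auto
    qed
    then have "(SUP k. of_nat k :: ennreal) \<le> liminf (\<lambda>n. ecard (upper_cells P B (d n)))"
      by (rule SUP_least)
    then show ?thesis
      by (simp add: ennreal_SUP_of_nat_eq_top top_unique)
  qed
qed

lemma nn_integral_cells:
  fixes N :: "(real \<times> real) measure" and c :: "int \<times> int \<Rightarrow> ennreal"
  assumes N: "sets N = sets borel" and "0 < d" and X: "X \<in> sets borel"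
  shows "(\<integral>\<^sup>+Q. emeasure N (cell d Q \<inter> X) * c Q \<partial>count_space UNIV) =
    (\<integral>\<^sup>+y. indicator X y * c (cell_index d y) \<partial>N)"
proof -
  have [measurable_cong]: "sets N = sets borel"
    by (fact N)
  have "(\<integral>\<^sup>+Q. emeasure N (cell d Q \<inter> X) * c Q \<partial>count_space UNIV) =
      (\<integral>\<^sup>+Q. \<integral>\<^sup>+y. c Q * indicator (cell d Q \<inter> X) y \<partial>N \<partial>count_space UNIV)"
    using X by (intro nn_integral_cong) (simp add: nn_integral_cmult_indicator mult.commute)
  also have "\<dots> = (\<integral>\<^sup>+y. \<integral>\<^sup>+Q. c Q * indicator (cell d Q \<inter> X) y \<partial>count_space UNIV \<partial>N)"
    using X by (subst nn_integral_count_space_nn_integral) simp_all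
  also have "\<dots> = (\<integral>\<^sup>+y. \<integral>\<^sup>+Q. (indicator X y * c (cell_index d y)) * indicator {cell_index d y} Q \<partial>count_space UNIV \<partial>N)"
    using \<open>0 < d\<close> by (intro nn_integral_cong) (auto simp: indicator_def mem_cell_iff)
  also have "\<dots> = (\<integral>\<^sup>+y. indicator X y * c (cell_index d y) \<partial>N)"
    by (simp add: nn_integral_cmult_indicator)
  finally show ?thesis .
qed

lemma nn_integral_head_intensity_strip:
  fixes g :: "real \<Rightarrow> real"
  assumes "0 \<le> lam" and B [measurable]: "B \<in> sets borel" and g [measurable]: "g \<in> borel_measurable borel"
    and "\<And>h. 0 \<le> g h"
  shows "(\<integral>\<^sup>+y. indicator (B \<times> {0<..}) y * ennreal (g (snd y)) \<partial>head_intensity lam) =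
    emeasure lborel B * (\<integral>\<^sup>+h. indicator {0<..} h * ennreal (2 * lam * g h) \<partial>lborel)"
proof -
  define G where "G = (\<integral>\<^sup>+h. indicator {0<..} h * ennreal (2 * lam * g h) \<partial>lborel)"
  define F where "F y = indicator B (fst y) * (indicator {0<..} (snd y) * ennreal (2 * lam * g (snd y)))"
    for y :: "real \<times> real"
  have F_measurable: "F \<in> borel_measurable (lborel \<Otimes>\<^sub>M lborel)"
    unfolding F_def by measurable
  have "(\<integral>\<^sup>+y. indicator (B \<times> {0<..}) y * ennreal (g (snd y)) \<partial>head_intensity lam) =
      (\<integral>\<^sup>+y. (if 0 < snd y then ennreal (2 * lam) else 0) * (indicator (B \<times> {0<..}) y * ennreal (g (snd y))) \<partial>lborel)"
    unfolding head_intensity_def by (subst nn_integral_density) auto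
  also have "\<dots> = (\<integral>\<^sup>+y. F y \<partial>(lborel \<Otimes>\<^sub>M lborel))"
    using assms by (auto intro!: nn_integral_cong simp: lborel_prod F_def indicator_def ennreal_mult)
  also have "\<dots> = (\<integral>\<^sup>+t. \<integral>\<^sup>+h. F (t, h) \<partial>lborel \<partial>lborel)"
    by (rule lborel.nn_integral_fst[symmetric, OF F_measurable])
  also have "\<dots> = (\<integral>\<^sup>+t. G * indicator B t \<partial>lborel)"
    unfolding F_def G_def by (intro nn_integral_cong) (simp add: nn_integral_cmult mult.commute)
  also have "\<dots> = emeasure lborel B * G"
    using B by (simp add: nn_integral_cmult_indicator mult.commute)
  finally show ?thesis
    by (simp add: G_def)
qed

lemma nn_integral_half_gaussian:
  "(\<integral>\<^sup>+x. ennreal (indicator {0..} x * exp (- x\<^sup>2)) \<partial>lborel) = ennreal (sqrt pi / 2)"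
proof -
  have "has_bochner_integral lborel (\<lambda>x. indicator {0..} x * exp (- x\<^sup>2)) (sqrt pi / 2)"
    using gaussian_moment_0 by simp
  then have "integrable lborel (\<lambda>x::real. indicator {0..} x * exp (- x\<^sup>2))"
    and "integral\<^sup>L lborel (\<lambda>x::real. indicator {0..} x * exp (- x\<^sup>2)) = sqrt pi / 2"
    by (auto simp: has_bochner_integral_iff)
  then show ?thesis
    by (subst nn_integral_eq_integral) auto
qed

text \<open>\<open>2 lam\<close> is the density of heads at height \<open>h\<close>, and \<open>exp (- pi * lam * r\<^sup>2)\<close> is the probability
  that no head lies in a ball of radius \<open>r\<close> around a point of the time axis. The upper and lower
  densities replace the shadow radius \<open>h\<close> by the radii of the balls in the definitions of the
  upper and lower cells; the factor \<open>exp (- 2 * lam * d\<^sup>2)\<close> pays for the emptiness of the rest of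
  the cell, whose intensity measure is at most \<open>2 * lam * d\<^sup>2\<close>.\<close>

definition envelope_density :: "real \<Rightarrow> real \<Rightarrow> ennreal" where
  "envelope_density lam h = indicator {0<..} h * ennreal (2 * lam * exp (- pi * lam * h\<^sup>2))"

definition upper_density :: "real \<Rightarrow> real \<Rightarrow> real \<Rightarrow> ennreal" where
  "upper_density lam d h = indicator {0<..} h * ennreal (2 * lam * exp (- pi * lam * (max 0 (h - 2 * d))\<^sup>2))"

definition lower_density :: "real \<Rightarrow> real \<Rightarrow> real \<Rightarrow> ennreal" where
  "lower_density lam d h = indicator {0<..} h * ennreal (2 * lam * exp (- pi * lam * (h + 2 * d)\<^sup>2 - 2 * lam * d\<^sup>2))"

lemma borel_measurable_upper_density [measurable]: "upper_density lam d \<in> borel_measurable borel"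
  unfolding upper_density_def by measurable

lemma borel_measurable_lower_density [measurable]: "lower_density lam d \<in> borel_measurable borel"
  unfolding lower_density_def by measurable

lemma nn_integral_envelope_density:
  assumes "0 < lam"
  shows "(\<integral>\<^sup>+h. envelope_density lam h \<partial>lborel) = ennreal (sqrt lam)"
proof -
  define s where "s = sqrt (pi * lam)"
  have "0 < s"
    using assms by (simp add: s_def)
  define I where "I = (\<integral>\<^sup>+h. ennreal (indicator {0..} h * exp (- pi * lam * h\<^sup>2)) \<partial>lborel)"
  have "ennreal (sqrt pi / 2) =
      ennreal \<bar>s\<bar> * (\<integral>\<^sup>+h. ennreal (indicator {0..} (0 + s * h) * exp (- (0 + s * h)\<^sup>2)) \<partial>lborel)"
    unfolding nn_integral_half_gaussian[symmetric] by (rule nn_integral_real_affine) (use \<open>0 < s\<close> in auto)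
  also have "(\<lambda>h. ennreal (indicator {0..} (0 + s * h) * exp (- (0 + s * h)\<^sup>2))) =
      (\<lambda>h. ennreal (indicator {0..} h * exp (- pi * lam * h\<^sup>2)))"
  proof -
    have "indicator {0..} (s * h) = (indicator {0..} h :: real)" for h
      using \<open>0 < s\<close> by (simp add: indicator_def zero_le_mult_iff)
    moreover have "(s * h)\<^sup>2 = pi * lam * h\<^sup>2" for h
      using assms by (simp add: s_def power_mult_distrib)
    ultimately show ?thesis
      by simp
  qed
  finally have "ennreal (sqrt pi / 2) = ennreal s * I"
    using \<open>0 < s\<close> by (simp add: I_def)
  then have "ennreal (1 / s) * ennreal (sqrt pi / 2) = I"
    using \<open>0 < s\<close> by (simp add: mult.assoc[symmetric] ennreal_mult[symmetric])
  then have half: "I = ennreal (sqrt pi / 2 / s)"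
    using \<open>0 < s\<close> by (simp add: ennreal_mult[symmetric] mult.commute)
  have "(\<integral>\<^sup>+h. envelope_density lam h \<partial>lborel) =
      (\<integral>\<^sup>+h. ennreal (2 * lam) * ennreal (indicator {0..} h * exp (- pi * lam * h\<^sup>2)) \<partial>lborel)"
    using assms AE_lborel_singleton[of 0]
    by (intro nn_integral_cong_AE) (auto elim!: eventually_mono simp: envelope_density_def indicator_def ennreal_mult)
  also have "\<dots> = ennreal (2 * lam) * I"
    unfolding I_def by (rule nn_integral_cmult) measurable
  also have "\<dots> = ennreal (2 * lam) * ennreal (sqrt pi / 2 / s)"
    by (simp only: half)
  also have "\<dots> = ennreal (sqrt lam)"
    using assms \<open>0 < s\<close> by (simp add: ennreal_mult[symmetric] s_def real_sqrt_mult field_simps)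
  finally show ?thesis .
qed

lemma upper_density_mono:
  assumes "0 \<le> lam" and "d \<le> d'"
  shows "upper_density lam d h \<le> upper_density lam d' h"
proof -
  have "(max 0 (h - 2 * d'))\<^sup>2 \<le> (max 0 (h - 2 * d))\<^sup>2"
    using assms(2) by (intro power_mono) auto
  then have "exp (- pi * lam * (max 0 (h - 2 * d))\<^sup>2) \<le> exp (- pi * lam * (max 0 (h - 2 * d'))\<^sup>2)"
    using assms(1) by (simp add: mult_left_mono)
  then show ?thesis
    unfolding upper_density_def using assms(1)
    by (intro mult_left_mono ennreal_leI) (auto intro: mult_left_mono)
qed

lemma lower_density_antimono:
  assumes "0 \<le> lam" and "0 \<le> d" and "d \<le> d'"
  shows "lower_density lam d' h \<le> lower_density lam d h"
proof (cases "0 < h")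
  case True
  have "(h + 2 * d)\<^sup>2 \<le> (h + 2 * d')\<^sup>2" and "d\<^sup>2 \<le> d'\<^sup>2"
    using True assms(2,3) by (auto intro!: power_mono)
  then have "pi * lam * (h + 2 * d)\<^sup>2 + 2 * lam * d\<^sup>2 \<le> pi * lam * (h + 2 * d')\<^sup>2 + 2 * lam * d'\<^sup>2"
    using assms(1) by (intro add_mono mult_left_mono) auto
  then have "exp (- pi * lam * (h + 2 * d')\<^sup>2 - 2 * lam * d'\<^sup>2) \<le> exp (- pi * lam * (h + 2 * d)\<^sup>2 - 2 * lam * d\<^sup>2)"
    by simp
  then show ?thesis
    unfolding lower_density_def using assms(1)
    by (intro mult_left_mono ennreal_leI) (auto intro: mult_left_mono)
qed (simp add: lower_density_def)

lemma tendsto_upper_density: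
  assumes "d \<longlonglongrightarrow> 0"
  shows "(\<lambda>n. upper_density lam (d n) h) \<longlonglongrightarrow> envelope_density lam h"
proof -
  have "(\<lambda>n. ennreal (2 * lam * exp (- pi * lam * (max 0 (h - 2 * d n))\<^sup>2))) \<longlonglongrightarrow>
      ennreal (2 * lam * exp (- pi * lam * (max 0 (h - 2 * 0))\<^sup>2))"
    by (intro tendsto_intros assms)
  then show ?thesis
    by (cases "0 < h") (simp_all add: upper_density_def envelope_density_def)
qed

lemma tendsto_lower_density:
  assumes "d \<longlonglongrightarrow> 0"
  shows "(\<lambda>n. lower_density lam (d n) h) \<longlonglongrightarrow> envelope_density lam h"
proof -
  have "(\<lambda>n. ennreal (2 * lam * exp (- pi * lam * (h + 2 * d n)\<^sup>2 - 2 * lam * (d n)\<^sup>2))) \<longlonglongrightarrow>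
      ennreal (2 * lam * exp (- pi * lam * (h + 2 * 0)\<^sup>2 - 2 * lam * 0\<^sup>2))"
    by (intro tendsto_intros assms)
  then show ?thesis
    by (cases "0 < h") (simp_all add: lower_density_def envelope_density_def)
qed

lemma nn_integral_upper_density_finite:
  assumes "0 < lam"
  shows "(\<integral>\<^sup>+h. upper_density lam 1 h \<partial>lborel) < \<infinity>"
proof -
  define G where "G h = envelope_density lam (h - 2)" for h
  have [measurable]: "G \<in> borel_measurable borel"
    unfolding G_def envelope_density_def by measurable
  have "upper_density lam 1 h \<le> ennreal (2 * lam) * indicator {0..2} h + G h" for h
  proof (cases "h \<le> 2")
    case True
    then have "upper_density lam 1 h \<le> ennreal (2 * lam) * indicator {0..2} h"
      using assms by (auto simp: upper_density_def indicator_def intro!: ennreal_leI)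
    then show ?thesis
      by (simp add: add_increasing2)
  next
    case False
    then show ?thesis
      by (simp add: upper_density_def envelope_density_def G_def indicator_def)
  qed
  then have "(\<integral>\<^sup>+h. upper_density lam 1 h \<partial>lborel) \<le> (\<integral>\<^sup>+h. ennreal (2 * lam) * indicator {0..2} h + G h \<partial>lborel)"
    by (intro nn_integral_mono)
  also have "\<dots> = ennreal (2 * lam) * 2 + (\<integral>\<^sup>+h. G h \<partial>lborel)"
    by (subst nn_integral_add) (auto simp: nn_integral_cmult_indicator)
  also have "(\<integral>\<^sup>+h. G h \<partial>lborel) = ennreal \<bar>1\<bar> * (\<integral>\<^sup>+h. G (2 + 1 * h) \<partial>lborel)"
    by (rule nn_integral_real_affine) auto
  also have "\<dots> = ennreal (sqrt lam)"
    using nn_integral_envelope_density[OF assms] by (simp add: G_def)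
  finally show ?thesis
    by (simp add: ennreal_mult_less_top le_less_trans)
qed

definition mesh :: "nat \<Rightarrow> real" where
  "mesh n = inverse (real (Suc n))"

lemma mesh_pos: "0 < mesh n"
  by (simp add: mesh_def)

lemma mesh_antimono: "m \<le> n \<Longrightarrow> mesh n \<le> mesh m"
  by (simp add: mesh_def le_imp_inverse_le)

lemma mesh_tendsto_0: "mesh \<longlonglongrightarrow> 0"
  unfolding mesh_def by (rule LIMSEQ_inverse_real_of_nat)

lemma tendsto_nn_integral_upper_density:
  assumes "0 < lam"
  shows "(\<lambda>n. \<integral>\<^sup>+h. upper_density lam (mesh n) h \<partial>lborel) \<longlonglongrightarrow> ennreal (sqrt lam)"
proof -
  have dec: "decseq (\<lambda>n. upper_density lam (mesh n))"
    using assms by (intro decseq_SucI le_funI upper_density_mono mesh_antimono) auto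
  have "(\<integral>\<^sup>+h. upper_density lam (mesh 0) h \<partial>lborel) < \<infinity>"
    using nn_integral_upper_density_finite[OF assms] by (simp add: mesh_def)
  then have "(\<integral>\<^sup>+h. (INF n. upper_density lam (mesh n) h) \<partial>lborel) =
      (INF n. \<integral>\<^sup>+h. upper_density lam (mesh n) h \<partial>lborel)"
    by (intro nn_integral_monotone_convergence_INF_decseq[OF dec]) simp_all
  moreover have "(INF n. upper_density lam (mesh n) h) = envelope_density lam h" for h
  proof -
    have "decseq (\<lambda>n. upper_density lam (mesh n) h)"
      using assms by (intro decseq_SucI upper_density_mono mesh_antimono) auto
    from LIMSEQ_unique[OF LIMSEQ_INF[OF this] tendsto_upper_density[OF mesh_tendsto_0]]
    show ?thesis .
  qed
  ultimately have "(INF n. \<integral>\<^sup>+h. upper_density lam (mesh n) h \<partial>lborel) = ennreal (sqrt lam)"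
    using nn_integral_envelope_density[OF assms] by simp
  moreover have "decseq (\<lambda>n. \<integral>\<^sup>+h. upper_density lam (mesh n) h \<partial>lborel)"
    using assms by (intro decseq_SucI nn_integral_mono upper_density_mono mesh_antimono) auto
  ultimately show ?thesis
    using LIMSEQ_INF by metis
qed

lemma SUP_nn_integral_lower_density:
  assumes "0 < lam"
  shows "(SUP n. \<integral>\<^sup>+h. lower_density lam (mesh n) h \<partial>lborel) = ennreal (sqrt lam)"
proof -
  have inc: "incseq (\<lambda>n. lower_density lam (mesh n))"
    using assms by (intro incseq_SucI le_funI lower_density_antimono mesh_antimono) (auto intro: less_imp_le mesh_pos)
  have "(\<integral>\<^sup>+h. (SUP n. lower_density lam (mesh n) h) \<partial>lborel) =
      (SUP n. \<integral>\<^sup>+h. lower_density lam (mesh n) h \<partial>lborel)"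
    by (intro nn_integral_monotone_convergence_SUP[OF inc]) simp
  moreover have "(SUP n. lower_density lam (mesh n) h) = envelope_density lam h" for h
  proof -
    have "incseq (\<lambda>n. lower_density lam (mesh n) h)"
      using assms by (intro incseq_SucI lower_density_antimono mesh_antimono) (auto intro: less_imp_le mesh_pos)
    from LIMSEQ_unique[OF LIMSEQ_SUP[OF this] tendsto_lower_density[OF mesh_tendsto_0]]
    show ?thesis .
  qed
  ultimately show ?thesis
    using nn_integral_envelope_density[OF assms] by simp
qed

section \<open>Expected number of envelope heads\<close>

locale head_process =
  fixes M :: "'w measure" and H :: "'w \<Rightarrow> (real \<times> real) set" and lam :: real
  assumes lam_pos: "0 < lam" and poisson_heads: "poisson_pp M H (head_intensity lam)"
begin

sublocale poisson_process M H "head_intensity lam"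
  by (rule poisson_process.intro) (fact poisson_heads)

lemma AE_heads_upper: "AE \<omega> in M. \<forall>q\<in>H \<omega>. 0 < snd q"
proof -
  have "AE \<omega> in M. H \<omega> \<inter> {y. snd y \<le> 0} = {}"
    using lam_pos by (intro AE_disjoint_null_set emeasure_head_intensity_lower_half_plane) auto
  then show ?thesis
    by (rule eventually_mono) (auto simp: not_le[symmetric])
qed

lemma AE_heads_locally_finite: "AE \<omega> in M. \<forall>K. bounded K \<longrightarrow> finite (H \<omega> \<inter> K)"
proof -
  have "AE \<omega> in M. \<forall>k::nat. finite (H \<omega> \<inter> cball 0 (real k))"
    using lam_pos by (subst AE_all_countable) (auto intro!: AE_finite_inter emeasure_head_intensity_bounded)
  then show ?thesis
  proof (rule eventually_mono, intro allI impI)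
    fix \<omega> and K :: "(real \<times> real) set"
    assume fin: "\<forall>k::nat. finite (H \<omega> \<inter> cball 0 (real k))" and "bounded K"
    then obtain r where "\<forall>y\<in>K. norm y \<le> r"
      by (auto simp: bounded_iff)
    moreover obtain k :: nat where "r \<le> real k"
      using real_arch_simple by blast
    ultimately have "H \<omega> \<inter> K \<subseteq> H \<omega> \<inter> cball 0 (real k)"
      by (force simp: mem_cball_0)
    then show "finite (H \<omega> \<inter> K)"
      using fin finite_subset by blast
  qed
qed

lemma upper_cells_events:
  assumes "B \<in> sets borel"
  shows "{\<omega>\<in>space M. Q \<in> upper_cells (H \<omega>) B d} \<in> sets M"
proof -
  have "{\<omega>\<in>space M. Q \<in> upper_cells (H \<omega>) B d} =
      {\<omega>\<in>space M. pcount (H \<omega>) (cell d Q \<inter> B \<times> {0<..}) = 1} \<inter>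
      {\<omega>\<in>space M. pcount (H \<omega>) (ball (fst (corner d Q), 0) (snd (corner d Q) - d)) = 0}"
    by (auto simp: upper_cells_def)
  then show ?thesis
    using assms by (auto intro!: sets.Int sets_pcount_eq)
qed

lemma lower_cells_events:
  assumes "B \<in> sets borel"
  shows "{\<omega>\<in>space M. Q \<in> lower_cells (H \<omega>) B d} \<in> sets M"
proof -
  have "{\<omega>\<in>space M. Q \<in> lower_cells (H \<omega>) B d} =
      {\<omega>\<in>space M. pcount (H \<omega>) (cell d Q \<inter> B \<times> {0<..}) = 1} \<inter>
      {\<omega>\<in>space M. pcount (H \<omega>) ((ball (fst (corner d Q), 0) (snd (corner d Q) + 2 * d) \<union> cell d Q) -
        (cell d Q \<inter> B \<times> {0<..})) = 0}"
    by (auto simp: lower_cells_def)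
  then show ?thesis
    using assms by (auto intro!: sets.Int sets.Diff sets.Un sets_pcount_eq)
qed

lemma emeasure_head_intensity_cell_finite:
  "0 < d \<Longrightarrow> X \<subseteq> cell d Q \<Longrightarrow> emeasure (head_intensity lam) X < \<infinity>"
  using emeasure_mono[of X "cell d Q" "head_intensity lam"] emeasure_head_intensity_cell_le[of lam d Q] lam_pos
  by (simp add: le_less_trans)

lemma emeasure_head_intensity_ball_finite: "emeasure (head_intensity lam) (ball (c, 0) r) < \<infinity>"
  using lam_pos by (intro emeasure_head_intensity_bounded) auto

lemma prob_upper_cell_le:
  assumes B: "B \<in> sets borel" and "0 < d"
  shows "emeasure M {\<omega>\<in>space M. Q \<in> upper_cells (H \<omega>) B d} \<le>
    emeasure (head_intensity lam) (cell d Q \<inter> B \<times> {0<..}) * ennreal (exp (- pi * lam * (max 0 (snd (corner d Q) - d))\<^sup>2))"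
proof -
  define X where "X = cell d Q \<inter> B \<times> {0<..}"
  define Y where "Y = ball (fst (corner d Q), 0::real) (snd (corner d Q) - d)"
  have X: "X \<in> sets (head_intensity lam)" "emeasure (head_intensity lam) X < \<infinity>"
    using B emeasure_head_intensity_cell_finite[OF \<open>0 < d\<close>, of X Q] by (auto simp: X_def)
  have Y: "Y \<in> sets (head_intensity lam)" "emeasure (head_intensity lam) Y < \<infinity>"
    using emeasure_head_intensity_ball_finite by (simp_all add: Y_def)
  have "X \<inter> Y = {}"
    using cell_disjoint_lower_ball[of d Q] \<open>0 < d\<close> by (auto simp: X_def Y_def)
  have "emeasure M {\<omega>\<in>space M. Q \<in> upper_cells (H \<omega>) B d} =
      ennreal (measure (head_intensity lam) X * exp (- measure (head_intensity lam) X) * exp (- measure (head_intensity lam) Y))"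
    using prob_pcount_1_0[OF X Y \<open>X \<inter> Y = {}\<close>]
    by (simp add: emeasure_eq_measure upper_cells_def X_def Y_def)
  also have "\<dots> \<le> ennreal (measure (head_intensity lam) X * exp (- measure (head_intensity lam) Y))"
    by (intro ennreal_leI mult_right_mono mult_left_le) auto
  also have "\<dots> = emeasure (head_intensity lam) X * ennreal (exp (- pi * lam * (max 0 (snd (corner d Q) - d))\<^sup>2))"
    using X lam_pos by (simp add: Y_def measure_head_intensity_ball ennreal_mult emeasure_eq_ennreal_measure)
  finally show ?thesis
    by (simp add: X_def)
qed

lemma prob_lower_cell_ge:
  assumes B: "B \<in> sets borel" and "0 < d"
  shows "emeasure (head_intensity lam) (cell d Q \<inter> B \<times> {0<..}) *
      ennreal (exp (- pi * lam * (max 0 (snd (corner d Q) + 2 * d))\<^sup>2 - 2 * lam * d\<^sup>2))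
    \<le> emeasure M {\<omega>\<in>space M. Q \<in> lower_cells (H \<omega>) B d}"
proof -
  define X where "X = cell d Q \<inter> B \<times> {0<..}"
  define U where "U = ball (fst (corner d Q), 0::real) (snd (corner d Q) + 2 * d)"
  define W where "W = (U \<union> cell d Q) - X"
  let ?m = "measure (head_intensity lam)"
  have X: "X \<in> sets (head_intensity lam)" "emeasure (head_intensity lam) X < \<infinity>"
    using B emeasure_head_intensity_cell_finite[OF \<open>0 < d\<close>, of X Q] by (auto simp: X_def)
  have U: "emeasure (head_intensity lam) U < \<infinity>" and cell: "emeasure (head_intensity lam) (cell d Q) < \<infinity>"
    using emeasure_head_intensity_ball_finite emeasure_head_intensity_cell_finite[OF \<open>0 < d\<close> order_refl]
    by (simp_all add: U_def)
  have W: "W \<in> sets (head_intensity lam)" "emeasure (head_intensity lam) W < \<infinity>"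
    using B U cell emeasure_subadditive[of U "head_intensity lam" "cell d Q"]
      emeasure_mono[of W "U \<union> cell d Q" "head_intensity lam"]
    by (auto simp: W_def X_def U_def ennreal_add_less_top le_less_trans)
  have "X \<inter> W = {}" and XW: "X \<union> W = U \<union> cell d Q"
    by (auto simp: W_def X_def)
  then have "?m X + ?m W = ?m (U \<union> cell d Q)"
    using X W measure_Union[of "head_intensity lam" X W] by simp
  also have "\<dots> \<le> ?m U + ?m (cell d Q)"
    by (rule measure_Un_le) (simp_all add: U_def)
  also have "?m U = pi * lam * (max 0 (snd (corner d Q) + 2 * d))\<^sup>2"
    using lam_pos by (simp add: U_def measure_head_intensity_ball)
  also have "?m (cell d Q) \<le> 2 * lam * d\<^sup>2"
    using emeasure_head_intensity_cell_le[of lam d Q] lam_pos \<open>0 < d\<close> cell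
    by (simp add: measure_def enn2real_leI)
  finally have sum: "?m X + ?m W \<le> pi * lam * (max 0 (snd (corner d Q) + 2 * d))\<^sup>2 + 2 * lam * d\<^sup>2"
    by simp
  have "emeasure (head_intensity lam) X * ennreal (exp (- pi * lam * (max 0 (snd (corner d Q) + 2 * d))\<^sup>2 - 2 * lam * d\<^sup>2))
      = ennreal (?m X * exp (- pi * lam * (max 0 (snd (corner d Q) + 2 * d))\<^sup>2 - 2 * lam * d\<^sup>2))"
    using X by (simp add: ennreal_mult emeasure_eq_ennreal_measure)
  also have "\<dots> \<le> ennreal (?m X * exp (- ?m X) * exp (- ?m W))"
    using sum by (auto simp: mult.assoc exp_add[symmetric] intro!: ennreal_leI mult_left_mono)
  also have "\<dots> = emeasure M {\<omega>\<in>space M. Q \<in> lower_cells (H \<omega>) B d}"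
    using prob_pcount_1_0[OF X W] by (simp add: emeasure_eq_measure lower_cells_def X_def U_def W_def)
  finally show ?thesis
    by (simp add: X_def)
qed

lemma nn_integral_upper_cells_le:
  assumes B [measurable]: "B \<in> sets borel" and "0 < d"
  shows "(\<integral>\<^sup>+\<omega>. ecard (upper_cells (H \<omega>) B d) \<partial>M) \<le> emeasure lborel B * (\<integral>\<^sup>+h. upper_density lam d h \<partial>lborel)"
proof -
  define c where "c Q = ennreal (exp (- pi * lam * (max 0 (snd (corner d Q) - d))\<^sup>2))" for Q
  have "(\<integral>\<^sup>+\<omega>. ecard (upper_cells (H \<omega>) B d) \<partial>M) =
      (\<integral>\<^sup>+Q. emeasure M {\<omega>\<in>space M. Q \<in> upper_cells (H \<omega>) B d} \<partial>count_space UNIV)"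
    using B by (intro nn_integral_ecard_random_set upper_cells_events)
  also have "\<dots> \<le> (\<integral>\<^sup>+Q. emeasure (head_intensity lam) (cell d Q \<inter> B \<times> {0<..}) * c Q \<partial>count_space UNIV)"
    unfolding c_def using \<open>0 < d\<close> by (intro nn_integral_mono prob_upper_cell_le B)
  also have "\<dots> = (\<integral>\<^sup>+y. indicator (B \<times> {0<..}) y * c (cell_index d y) \<partial>head_intensity lam)"
    using \<open>0 < d\<close> by (intro nn_integral_cells) simp_all
  also have "\<dots> \<le> (\<integral>\<^sup>+y. indicator (B \<times> {0<..}) y * ennreal (exp (- pi * lam * (max 0 (snd y - 2 * d))\<^sup>2)) \<partial>head_intensity lam)"
  proof (intro nn_integral_mono mult_left_mono)
    fix y :: "real \<times> real"
    have "snd y < snd (corner d (cell_index d y)) + d"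
      using mem_cellD[OF mem_cell_index[OF \<open>0 < d\<close>]] by blast
    then have "(max 0 (snd y - 2 * d))\<^sup>2 \<le> (max 0 (snd (corner d (cell_index d y)) - d))\<^sup>2"
      by (intro power_mono) auto
    then show "c (cell_index d y) \<le> ennreal (exp (- pi * lam * (max 0 (snd y - 2 * d))\<^sup>2))"
      unfolding c_def using lam_pos by (intro ennreal_leI) (simp add: mult_left_mono)
  qed simp
  also have "\<dots> = emeasure lborel B * (\<integral>\<^sup>+h. upper_density lam d h \<partial>lborel)"
    using lam_pos by (subst nn_integral_head_intensity_strip) (simp_all add: upper_density_def[abs_def])
  finally show ?thesis .
qed

lemma nn_integral_lower_cells_ge:
  assumes B [measurable]: "B \<in> sets borel" and "0 < d"
  shows "emeasure lborel B * (\<integral>\<^sup>+h. lower_density lam d h \<partial>lborel) \<le> (\<integral>\<^sup>+\<omega>. ecard (lower_cells (H \<omega>) B d) \<partial>M)"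
proof -
  define c where "c Q = ennreal (exp (- pi * lam * (max 0 (snd (corner d Q) + 2 * d))\<^sup>2 - 2 * lam * d\<^sup>2))" for Q
  have "emeasure lborel B * (\<integral>\<^sup>+h. lower_density lam d h \<partial>lborel) =
      (\<integral>\<^sup>+y. indicator (B \<times> {0<..}) y * ennreal (exp (- pi * lam * (snd y + 2 * d)\<^sup>2 - 2 * lam * d\<^sup>2)) \<partial>head_intensity lam)"
    using lam_pos by (subst nn_integral_head_intensity_strip) (simp_all add: lower_density_def[abs_def])
  also have "\<dots> \<le> (\<integral>\<^sup>+y. indicator (B \<times> {0<..}) y * c (cell_index d y) \<partial>head_intensity lam)"
  proof (intro nn_integral_mono)
    fix y :: "real \<times> real"
    show "indicator (B \<times> {0<..}) y * ennreal (exp (- pi * lam * (snd y + 2 * d)\<^sup>2 - 2 * lam * d\<^sup>2))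
        \<le> indicator (B \<times> {0<..}) y * c (cell_index d y)"
    proof (cases "y \<in> B \<times> {0<..}")
      case True
      have "snd (corner d (cell_index d y)) \<le> snd y"
        using mem_cellD[OF mem_cell_index[OF \<open>0 < d\<close>]] by blast
      then have "(max 0 (snd (corner d (cell_index d y)) + 2 * d))\<^sup>2 \<le> (snd y + 2 * d)\<^sup>2"
        using True \<open>0 < d\<close> by (intro power_mono) auto
      then show ?thesis
        unfolding c_def using lam_pos by (intro mult_left_mono ennreal_leI) (simp_all add: mult_left_mono)
    qed simp
  qed
  also have "\<dots> = (\<integral>\<^sup>+Q. emeasure (head_intensity lam) (cell d Q \<inter> B \<times> {0<..}) * c Q \<partial>count_space UNIV)"
    using \<open>0 < d\<close> by (intro nn_integral_cells[symmetric]) simp_all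
  also have "\<dots> \<le> (\<integral>\<^sup>+Q. emeasure M {\<omega>\<in>space M. Q \<in> lower_cells (H \<omega>) B d} \<partial>count_space UNIV)"
    unfolding c_def using \<open>0 < d\<close> by (intro nn_integral_mono prob_lower_cell_ge B)
  also have "\<dots> = (\<integral>\<^sup>+\<omega>. ecard (lower_cells (H \<omega>) B d) \<partial>M)"
    using B by (intro nn_integral_ecard_random_set[symmetric] lower_cells_events)
  finally show ?thesis .
qed

lemma nn_integral_pcount_AV_le:
  assumes B: "B \<in> sets borel"
  shows "(\<integral>\<^sup>+\<omega>. pcount (AV (H \<omega>)) B \<partial>M) \<le> ennreal (sqrt lam) * emeasure lborel B"
proof -
  have "AE \<omega> in M. pcount (AV (H \<omega>)) B \<le> liminf (\<lambda>n. ecard (upper_cells (H \<omega>) B (mesh n)))"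
    using AE_heads_upper AE_heads_locally_finite
    by eventually_elim (auto simp: pcount_AV intro!: ecard_envelope_heads_le_liminf mesh_tendsto_0 mesh_pos)
  then have "(\<integral>\<^sup>+\<omega>. pcount (AV (H \<omega>)) B \<partial>M) \<le>
      (\<integral>\<^sup>+\<omega>. liminf (\<lambda>n. ecard (upper_cells (H \<omega>) B (mesh n))) \<partial>M)"
    by (rule nn_integral_mono_AE)
  also have "\<dots> \<le> liminf (\<lambda>n. \<integral>\<^sup>+\<omega>. ecard (upper_cells (H \<omega>) B (mesh n)) \<partial>M)"
    using B by (intro nn_integral_liminf borel_measurable_ecard_random_set upper_cells_events)
  also have "\<dots> \<le> liminf (\<lambda>n. emeasure lborel B * (\<integral>\<^sup>+h. upper_density lam (mesh n) h \<partial>lborel))"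
    using B by (intro Liminf_mono always_eventually allI nn_integral_upper_cells_le mesh_pos)
  also have "\<dots> \<le> ennreal (sqrt lam) * emeasure lborel B"
  proof (cases "emeasure lborel B = \<infinity>")
    case True
    then show ?thesis
      using lam_pos by (simp add: ennreal_mult_top)
  next
    case False
    then have "(\<lambda>n. emeasure lborel B * (\<integral>\<^sup>+h. upper_density lam (mesh n) h \<partial>lborel)) \<longlonglongrightarrow>
        emeasure lborel B * ennreal (sqrt lam)"
      using tendsto_nn_integral_upper_density[OF lam_pos] by (intro ennreal_tendsto_cmult) (simp_all add: top.not_eq_extremum)
    then show ?thesis
      by (simp add: lim_imp_Liminf mult.commute)
  qed
  finally show ?thesis .
qed

lemma nn_integral_pcount_AV_ge:
  assumes B: "B \<in> sets borel"
  shows "ennreal (sqrt lam) * emeasure lborel B \<le> (\<integral>\<^sup>+\<omega>. pcount (AV (H \<omega>)) B \<partial>M)"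
proof -
  have "emeasure lborel B * (\<integral>\<^sup>+h. lower_density lam (mesh n) h \<partial>lborel) \<le> (\<integral>\<^sup>+\<omega>. pcount (AV (H \<omega>)) B \<partial>M)" for n
  proof -
    have "AE \<omega> in M. ecard (lower_cells (H \<omega>) B (mesh n)) \<le> pcount (AV (H \<omega>)) B"
      using AE_heads_upper by eventually_elim (simp add: pcount_AV ecard_lower_cells_le mesh_pos)
    then have "(\<integral>\<^sup>+\<omega>. ecard (lower_cells (H \<omega>) B (mesh n)) \<partial>M) \<le> (\<integral>\<^sup>+\<omega>. pcount (AV (H \<omega>)) B \<partial>M)"
      by (rule nn_integral_mono_AE)
    with nn_integral_lower_cells_ge[OF B mesh_pos] show ?thesis
      by (rule order_trans)
  qed
  then have "(SUP n. emeasure lborel B * (\<integral>\<^sup>+h. lower_density lam (mesh n) h \<partial>lborel)) \<le>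
      (\<integral>\<^sup>+\<omega>. pcount (AV (H \<omega>)) B \<partial>M)"
    by (rule SUP_least)
  then show ?thesis
    using SUP_nn_integral_lower_density[OF lam_pos]
    by (simp add: SUP_mult_left_ennreal[symmetric] mult.commute)
qed

end

theorem lemma5p8:
  fixes M :: "'w measure" and Heads :: "'w \<Rightarrow> (real \<times> real) set" and lam :: real
  assumes "0 < lam"
    and "poisson_pp M Heads (head_intensity lam)"
    and "B \<in> sets (lborel :: real measure)"
  shows "(\<integral>\<^sup>+ \<omega>. pcount (AV (Heads \<omega>)) B \<partial>M) = ennreal (sqrt lam) * emeasure lborel B"
proof -
  interpret head_process M Heads lam
    using assms(1,2) by unfold_locales
  show ?thesis
    using assms(3) by (intro antisym nn_integral_pcount_AV_le nn_integral_pcount_AV_ge) simp_all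
qed

end
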